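(* Let $\epsilon > 0$ be a sufficiently small universal constant. For every $G \in \mathcal{G}_{2n}$, the number of graphs in $\mathcal{G}_{2n}$ that are $(1\pm3\epsilon)$-cut sparsifiers of $G$ is at most $2^{n^2/4}$.
   Context: Fix disjoint vertex sets $L,R$ with $|L|=|R|=n$ and a fixed perfect matching $M$ of directed edges from $L$ to $R$. $\mathcal{G}_{2n}$ is the set of all unweighted directed graphs on vertex set $V=L\cup R$ whose set of edges from $L$ to $R$ is exactly $M$, whose edges from $R$ to $L$ form an arbitrary subset of $R\times L$, and which have no other edges. For directed graphs $G,H$ on the same vertex set $V$, $H$ is a $(1\pm\delta)$-cut sparsifier of $G$ if for all $S\subseteq V$, $(1-\delta)w_G(S,V\setminus S)\le w_H(S,V\setminus S)\le(1+\delta)w_G(S,V\setminus S)$, where $w_G(S,T)$ is the total weight (here, number) of edges of $G$ from $S$ to $T$. *)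

theory Defs
  imports Complex_Main
begin

definition cut_weight :: "(nat \<times> nat) set \<Rightarrow> nat set \<Rightarrow> nat set \<Rightarrow> nat" where
  "cut_weight E S T = card {e \<in> E. fst e \<in> S \<and> snd e \<in> T}"

definition is_cut_sparsifier :: "nat set \<Rightarrow> real \<Rightarrow> (nat \<times> nat) set \<Rightarrow> (nat \<times> nat) set \<Rightarrow> bool" where
  "is_cut_sparsifier V \<delta> G H \<longleftrightarrow>
     (\<forall>S. S \<subseteq> V \<longrightarrow>
        (1 - \<delta>) * real (cut_weight G S (V - S)) \<le> real (cut_weight H S (V - S)) \<and>
        real (cut_weight H S (V - S)) \<le> (1 + \<delta>) * real (cut_weight G S (V - S)))"

definition perfect_matching :: "nat set \<Rightarrow> nat set \<Rightarrow> (nat \<times> nat) set \<Rightarrow> bool" where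
  "perfect_matching L R M \<longleftrightarrow> M \<subseteq> L \<times> R \<and>
     (\<forall>l\<in>L. \<exists>!r. (l, r) \<in> M) \<and> (\<forall>r\<in>R. \<exists>!l. (l, r) \<in> M)"

text \<open>The class G_{2n}: L-to-R edges exactly M, R-to-L edges arbitrary, nothing else.\<close>
definition graph_class :: "nat set \<Rightarrow> nat set \<Rightarrow> (nat \<times> nat) set \<Rightarrow> (nat \<times> nat) set set" where
  "graph_class L R M = {E. \<exists>B. B \<subseteq> R \<times> L \<and> E = M \<union> B}"

end

theory Submission
  imports Defs "HOL-Library.FuncSet"
begin

(* For r in R and Y a subset of L, the only edges leaving S = insert r (L - Y) are the matching
  edges out of L - Y (at most n of them) and the edges from r into Y. Comparing G and H on
  this cut, with Y the set of out-neighbours that r gains, resp. loses, in passing from G to H,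
  shows that the out-neighbourhoods of r in G and H differ in at most 3 eps n / (1 - 3 eps),
  which is at most n/32 for eps <= 1/300. A graph of the class is determined by the
  out-neighbourhoods of the vertices of R, so there are at most
  (sum_{j <= n/32} (n choose j))^n <= (32^(n/32) (33/32)^n)^n <= 2^(n^2/4) sparsifiers. *)

lemma card_sym_diff_ball_le:
  assumes "finite A" "C \<subseteq> A"
  shows "card {X. X \<subseteq> A \<and> card (sym_diff X C) \<le> k} \<le> (\<Sum>j\<le>k. card A choose j)"
proof -
  have involution: "sym_diff (sym_diff X C) C = X" for X :: "'a set" by blast
  have "{X. X \<subseteq> A \<and> card (sym_diff X C) \<le> k} = (\<lambda>D. sym_diff D C) ` {D. D \<subseteq> A \<and> card D \<le> k}"
  proof (intro equalityI subsetI)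
    fix X assume "X \<in> {X. X \<subseteq> A \<and> card (sym_diff X C) \<le> k}"
    then show "X \<in> (\<lambda>D. sym_diff D C) ` {D. D \<subseteq> A \<and> card D \<le> k}"
      using assms(2) involution[of X] by (intro image_eqI[of X _ "sym_diff X C"]) auto
  next
    fix X assume "X \<in> (\<lambda>D. sym_diff D C) ` {D. D \<subseteq> A \<and> card D \<le> k}"
    then show "X \<in> {X. X \<subseteq> A \<and> card (sym_diff X C) \<le> k}"
      using assms(2) involution by auto
  qed
  moreover have "finite {D. D \<subseteq> A \<and> card D \<le> k}"
    using assms(1) by simp
  ultimately have "card {X. X \<subseteq> A \<and> card (sym_diff X C) \<le> k} \<le> card {D. D \<subseteq> A \<and> card D \<le> k}"
    by (simp add: card_image_le)
  also have "{D. D \<subseteq> A \<and> card D \<le> k} = (\<Union>j\<le>k. {D. D \<subseteq> A \<and> card D = j})" by auto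
  also have "card \<dots> \<le> (\<Sum>j\<le>k. card {D. D \<subseteq> A \<and> card D = j})"
    by (rule card_UN_le) simp
  also have "\<dots> = (\<Sum>j\<le>k. card A choose j)"
    using n_subsets[OF assms(1)] by simp
  finally show ?thesis .
qed

lemma card_relations_by_rows_le:
  assumes "finite R" "\<And>r. r \<in> R \<Longrightarrow> finite (F r)"
  shows "card {B. B \<subseteq> R \<times> L \<and> (\<forall>r\<in>R. B `` {r} \<in> F r)} \<le> (\<Prod>r\<in>R. card (F r))"
proof -
  let ?Bs = "{B. B \<subseteq> R \<times> L \<and> (\<forall>r\<in>R. B `` {r} \<in> F r)}"
  let ?rows = "\<lambda>B. restrict (\<lambda>r. B `` {r}) R"
  have "inj_on ?rows ?Bs"
  proof (rule inj_onI)
    fix B1 B2 assume "B1 \<in> ?Bs" "B2 \<in> ?Bs" "?rows B1 = ?rows B2"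
    then have "B1 = (SIGMA r:R. B1 `` {r})" "(SIGMA r:R. B1 `` {r}) = (SIGMA r:R. B2 `` {r})"
      "(SIGMA r:R. B2 `` {r}) = B2"
      by (auto simp: fun_eq_iff restrict_def split: if_splits)
    then show "B1 = B2" by simp
  qed
  moreover have "?rows ` ?Bs \<subseteq> PiE R F" by auto
  moreover have "finite (PiE R F)" using assms by (simp add: finite_PiE)
  ultimately have "card ?Bs \<le> card (PiE R F)" by (rule card_inj_on_le)
  also have "\<dots> = (\<Prod>r\<in>R. card (F r))" by (rule card_PiE[OF assms(1)])
  finally show ?thesis .
qed

lemma sum_binomial_le_power:
  fixes x :: real
  assumes "0 < x" "x \<le> 1"
  shows "(\<Sum>j\<le>k. real (n choose j)) \<le> (1 + x) ^ n / x ^ k"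
proof -
  have "x ^ k * (\<Sum>j\<le>k. real (n choose j)) \<le> (\<Sum>j\<le>k. real (n choose j) * x ^ j)"
    unfolding sum_distrib_left
  proof (intro sum_mono)
    fix j assume "j \<in> {..k}"
    then have "x ^ k \<le> x ^ j" using assms by (intro power_decreasing) auto
    then show "x ^ k * real (n choose j) \<le> real (n choose j) * x ^ j"
      by (simp add: mult.commute mult_right_mono)
  qed
  also have "\<dots> \<le> (\<Sum>j\<le>max k n. real (n choose j) * x ^ j)"
    by (intro sum_mono2) (use assms in auto)
  also have "\<dots> = (\<Sum>j\<le>n. real (n choose j) * x ^ j)"
    by (intro sum.mono_neutral_right) auto
  also have "\<dots> = (1 + x) ^ n"
    using binomial_ring[of x 1 n] by (simp add: add.commute)
  finally show ?thesis using assms by (simp add: field_simps)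
qed

lemma sum_binomial_le_two_powr:
  assumes "32 * k \<le> n"
  shows "(\<Sum>j\<le>k. real (n choose j)) \<le> 2 powr (real n / 4)"
proof -
  have "(33 / 32 :: real) = ((33 / 32) powr 16) powr (1 / 16)"
    by (subst powr_powr) simp
  also have "\<dots> \<le> 2 powr (1 / 16)"
    by (intro powr_mono2) (simp_all add: power_divide)
  finally have "(33 / 32 :: real) ^ n \<le> (2 powr (1 / 16)) ^ n"
    by (intro power_mono) simp_all
  also have "\<dots> = 2 powr (real n / 16)"
    by (simp add: powr_realpow [symmetric] powr_powr)
  finally have growth: "(33 / 32 :: real) ^ n \<le> 2 powr (real n / 16)" .
  have "(32 :: real) ^ k = 2 powr (5 * real k)"
    by (simp add: powr_realpow powr_powr [symmetric])
  also have "\<dots> \<le> 2 powr (5 * real n / 32)"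
    using assms by (intro powr_mono) linarith+
  finally have scale: "(32 :: real) ^ k \<le> 2 powr (5 * real n / 32)" .
  have "(\<Sum>j\<le>k. real (n choose j)) \<le> (33 / 32) ^ n * 32 ^ k"
    using sum_binomial_le_power[of "1 / 32" n k] by (simp add: power_one_over)
  also have "\<dots> \<le> 2 powr (real n / 16) * 2 powr (5 * real n / 32)"
    using growth scale by (intro mult_mono) simp_all
  also have "\<dots> \<le> 2 powr (real n / 4)"
    by (simp add: powr_add [symmetric])
  finally show ?thesis .
qed

lemma perfect_matching_card:
  assumes "perfect_matching L R M"
  shows "card M = card L"
proof -
  have "bij_betw fst M L"
    using assms unfolding perfect_matching_def bij_betw_def inj_on_def by force
  then show ?thesis by (rule bij_betw_same_card)
qed

lemma cut_weight_Un_disjoint: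
  assumes "finite E1" "finite E2" "E1 \<inter> E2 = {}"
  shows "cut_weight (E1 \<union> E2) S T = cut_weight E1 S T + cut_weight E2 S T"
proof -
  have "{e \<in> E1 \<union> E2. fst e \<in> S \<and> snd e \<in> T} =
      {e \<in> E1. fst e \<in> S \<and> snd e \<in> T} \<union> {e \<in> E2. fst e \<in> S \<and> snd e \<in> T}" by blast
  then show ?thesis
    unfolding cut_weight_def using assms by (simp add: card_Un_disjoint disjoint_iff)
qed

lemma cut_weight_le_card: "finite E \<Longrightarrow> cut_weight E S T \<le> card E"
  unfolding cut_weight_def by (intro card_mono) auto

lemma cut_weight_star:
  assumes "B \<subseteq> R \<times> L" "L \<inter> R = {}" "r \<in> R" "Y \<subseteq> L"
  shows "cut_weight B (insert r (L - Y)) (L \<union> R - insert r (L - Y)) = card (B `` {r} \<inter> Y)"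
proof -
  have "{e \<in> B. fst e \<in> insert r (L - Y) \<and> snd e \<in> L \<union> R - insert r (L - Y)} =
      Pair r ` (B `` {r} \<inter> Y)"
    using assms by auto
  then show ?thesis
    unfolding cut_weight_def by (simp add: card_image inj_on_def)
qed

lemma graph_class_decomp:
  assumes "H \<in> graph_class L R M" "perfect_matching L R M" "L \<inter> R = {}"
  shows "H = M \<union> (H \<inter> (R \<times> L))"
  using assms unfolding graph_class_def perfect_matching_def by blast

lemma graph_class_Image_subset:
  assumes "H \<in> graph_class L R M" "perfect_matching L R M" "L \<inter> R = {}" "r \<in> R"
  shows "H `` {r} \<subseteq> L"
  using assms unfolding graph_class_def perfect_matching_def by blast

lemma graph_class_cut_weight:
  assumes "H \<in> graph_class L R M" "perfect_matching L R M" "finite L" "finite R" "L \<inter> R = {}"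
    and "r \<in> R" "Y \<subseteq> L"
  shows "cut_weight H (insert r (L - Y)) (L \<union> R - insert r (L - Y)) =
    cut_weight M (insert r (L - Y)) (L \<union> R - insert r (L - Y)) + card (H `` {r} \<inter> Y)"
proof -
  obtain B where B: "B \<subseteq> R \<times> L" "H = M \<union> B"
    using assms(1) unfolding graph_class_def by blast
  have M: "M \<subseteq> L \<times> R" using assms(2) unfolding perfect_matching_def by blast
  have fin: "finite M" "finite B"
    using M B(1) assms(3,4) finite_subset by blast+
  have "M \<inter> B = {}" using M B(1) assms(5) by blast
  moreover have "H `` {r} = B `` {r}" using M B assms(5,6) by blast
  ultimately show ?thesis
    unfolding B(2) using cut_weight_Un_disjoint[OF fin] cut_weight_star[OF B(1) assms(5-7)] by simp
qed

lemma sparsifier_row_diff_bounds: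
  assumes G: "G \<in> graph_class L R M" and H: "H \<in> graph_class L R M"
    and pm: "perfect_matching L R M" and fin: "finite L" "finite R" and disj: "L \<inter> R = {}"
    and sp: "is_cut_sparsifier (L \<union> R) \<delta> G H" and "0 \<le> \<delta>" and r: "r \<in> R"
  shows "real (card (H `` {r} - G `` {r})) \<le> \<delta> * card L"
    and "(1 - \<delta>) * real (card (G `` {r} - H `` {r})) \<le> \<delta> * card L"
proof -
  define S where "S Y = insert r (L - Y)" for Y
  define m where "m Y = cut_weight M (S Y) (L \<union> R - S Y)" for Y
  have "finite M"
    using pm fin unfolding perfect_matching_def by (meson finite_SigmaI finite_subset)
  then have m_le: "m Y \<le> card L" for Y
    unfolding m_def using cut_weight_le_card perfect_matching_card[OF pm] by metis
  have sandwich: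
    "(1 - \<delta>) * real (m Y + card (G `` {r} \<inter> Y)) \<le> real (m Y + card (H `` {r} \<inter> Y)) \<and>
     real (m Y + card (H `` {r} \<inter> Y)) \<le> (1 + \<delta>) * real (m Y + card (G `` {r} \<inter> Y))"
    if "Y \<subseteq> L" for Y
  proof -
    have "S Y \<subseteq> L \<union> R" using r unfolding S_def by blast
    then show ?thesis
      using sp graph_class_cut_weight[OF G pm fin disj r that] graph_class_cut_weight[OF H pm fin disj r that]
      unfolding is_cut_sparsifier_def m_def S_def by metis
  qed
  let ?gained = "H `` {r} - G `` {r}" and ?lost = "G `` {r} - H `` {r}"
  have "?gained \<subseteq> L" "?lost \<subseteq> L"
    using graph_class_Image_subset[OF G pm disj r] graph_class_Image_subset[OF H pm disj r] by blast+
  have "G `` {r} \<inter> ?gained = {}" "H `` {r} \<inter> ?gained = ?gained"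
    "G `` {r} \<inter> ?lost = ?lost" "H `` {r} \<inter> ?lost = {}" by blast+
  with sandwich[OF \<open>?gained \<subseteq> L\<close>] sandwich[OF \<open>?lost \<subseteq> L\<close>]
  have "real (card ?gained) \<le> \<delta> * m ?gained" "(1 - \<delta>) * real (card ?lost) \<le> \<delta> * m ?lost"
    by (simp_all add: algebra_simps)
  moreover have "\<delta> * m Y \<le> \<delta> * card L" for Y
    using m_le \<open>0 \<le> \<delta>\<close> by (simp add: mult_left_mono)
  ultimately show "real (card ?gained) \<le> \<delta> * card L" "(1 - \<delta>) * real (card ?lost) \<le> \<delta> * card L"
    by (meson order_trans)+
qed

lemma sparsifier_row_sym_diff_le:
  assumes G: "G \<in> graph_class L R M" and H: "H \<in> graph_class L R M"
    and pm: "perfect_matching L R M" and fin: "finite L" "finite R" and disj: "L \<inter> R = {}"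
    and sp: "is_cut_sparsifier (L \<union> R) \<delta> G H" and \<delta>: "0 \<le> \<delta>" "\<delta> \<le> 1 / 100" and r: "r \<in> R"
  shows "card (sym_diff (H `` {r}) (G `` {r})) \<le> card L div 32"
proof -
  let ?gained = "H `` {r} - G `` {r}" and ?lost = "G `` {r} - H `` {r}"
  note bounds = sparsifier_row_diff_bounds[OF G H pm fin disj sp \<delta>(1) r]
  have small: "\<delta> * card L \<le> card L / 100"
    using mult_right_mono[OF \<delta>(2), of "card L"] by simp
  have "99 / 100 * real (card ?lost) \<le> (1 - \<delta>) * card ?lost"
    using \<delta>(2) by (intro mult_right_mono) simp_all
  then have "real (card ?gained) \<le> card L / 100" "real (card ?lost) \<le> card L / 99"
    using bounds small by linarith+
  moreover have "card (sym_diff (H `` {r}) (G `` {r})) \<le> card ?gained + card ?lost"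
    by (rule card_Un_le)
  ultimately have "32 * card (sym_diff (H `` {r}) (G `` {r})) \<le> card L" by linarith
  then show ?thesis by (simp add: less_eq_div_iff_mult_less_eq mult.commute)
qed

lemma card_sparsifiers_le:
  assumes G: "G \<in> graph_class L R M" and pm: "perfect_matching L R M"
    and fin: "finite L" "finite R" and disj: "L \<inter> R = {}" and \<delta>: "0 \<le> \<delta>" "\<delta> \<le> 1 / 100"
  shows "card {H \<in> graph_class L R M. is_cut_sparsifier (L \<union> R) \<delta> G H}
    \<le> (\<Sum>j\<le>card L div 32. card L choose j) ^ card R"
proof -
  let ?Hs = "{H \<in> graph_class L R M. is_cut_sparsifier (L \<union> R) \<delta> G H}"
  define F where "F r = {X. X \<subseteq> L \<and> card (sym_diff X (G `` {r})) \<le> card L div 32}" for r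
  let ?Bs = "{B. B \<subseteq> R \<times> L \<and> (\<forall>r\<in>R. B `` {r} \<in> F r)}"
  have "inj_on (\<lambda>H. H \<inter> (R \<times> L)) ?Hs"
  proof (rule inj_onI)
    fix H1 H2 assume "H1 \<in> ?Hs" "H2 \<in> ?Hs" and eq: "H1 \<inter> (R \<times> L) = H2 \<inter> (R \<times> L)"
    have "H1 = M \<union> (H1 \<inter> (R \<times> L))"
      using \<open>H1 \<in> ?Hs\<close> graph_class_decomp[OF _ pm disj] by blast
    also have "\<dots> = M \<union> (H2 \<inter> (R \<times> L))" by (simp only: eq)
    also have "\<dots> = H2"
      using \<open>H2 \<in> ?Hs\<close> graph_class_decomp[OF _ pm disj] by blast
    finally show "H1 = H2" .
  qed
  moreover have "(H \<inter> (R \<times> L)) `` {r} \<in> F r" if "H \<in> ?Hs" "r \<in> R" for H r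
  proof -
    have H: "H \<in> graph_class L R M" and sp: "is_cut_sparsifier (L \<union> R) \<delta> G H" using that(1) by simp_all
    have "(H \<inter> (R \<times> L)) `` {r} = H `` {r}"
      using graph_class_Image_subset[OF H pm disj that(2)] that(2) by blast
    then show ?thesis
      using sparsifier_row_sym_diff_le[OF G H pm fin disj sp \<delta> that(2)]
        graph_class_Image_subset[OF H pm disj that(2)]
      unfolding F_def by simp
  qed
  then have "(\<lambda>H. H \<inter> (R \<times> L)) ` ?Hs \<subseteq> ?Bs" by blast
  moreover have "finite ?Bs"
    using fin by (auto intro: finite_subset[of _ "Pow (R \<times> L)"])
  ultimately have "card ?Hs \<le> card ?Bs" by (rule card_inj_on_le)
  also have "\<dots> \<le> (\<Prod>r\<in>R. card (F r))"
    using fin unfolding F_def by (intro card_relations_by_rows_le) auto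
  also have "\<dots> \<le> (\<Prod>r\<in>R. \<Sum>j\<le>card L div 32. card L choose j)"
    using fin graph_class_Image_subset[OF G pm disj] unfolding F_def
    by (intro prod_mono) (simp add: card_sym_diff_ball_le)
  finally show ?thesis by simp
qed

theorem lemma6:
  shows "\<exists>\<epsilon>0 > 0. \<forall>\<epsilon>::real. 0 < \<epsilon> \<and> \<epsilon> \<le> \<epsilon>0 \<longrightarrow>
     (\<forall>(n::nat) L R M G.
        finite L \<and> finite R \<and> L \<inter> R = {} \<and> card L = n \<and> card R = n \<and>
        perfect_matching L R M \<and> G \<in> graph_class L R M \<longrightarrow>
        real (card {H \<in> graph_class L R M. is_cut_sparsifier (L \<union> R) (3 * \<epsilon>) G H})
          \<le> 2 powr (real n ^ 2 / 4))"
proof (intro exI[of _ "1 / 300"] conjI allI impI)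
  fix \<epsilon> :: real and n L R M G
  let ?sparsifiers = "{H \<in> graph_class L R M. is_cut_sparsifier (L \<union> R) (3 * \<epsilon>) G H}"
  assume "0 < \<epsilon> \<and> \<epsilon> \<le> 1 / 300"
  then have \<delta>: "0 \<le> 3 * \<epsilon>" "3 * \<epsilon> \<le> 1 / 100" by simp_all
  assume graphs: "finite L \<and> finite R \<and> L \<inter> R = {} \<and> card L = n \<and> card R = n \<and>
    perfect_matching L R M \<and> G \<in> graph_class L R M"
  then have "card ?sparsifiers \<le> (\<Sum>j\<le>card L div 32. card L choose j) ^ card R"
    by (intro card_sparsifiers_le \<delta>) blast+
  then have "real (card ?sparsifiers) \<le> (\<Sum>j\<le>n div 32. real (n choose j)) ^ n"
    using graphs by (simp flip: of_nat_sum of_nat_power)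
  also have "\<dots> \<le> (2 powr (real n / 4)) ^ n"
    by (intro power_mono sum_binomial_le_two_powr sum_nonneg) simp_all
  also have "\<dots> = 2 powr (real n ^ 2 / 4)"
    by (simp add: powr_realpow [symmetric] powr_powr power2_eq_square)
  finally show "real (card ?sparsifiers) \<le> 2 powr (real n ^ 2 / 4)" .
qed simp

end
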